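(* Fix an integer $N_T\ge 1$ and let $B_T=1/N_T$. Fix parameters $\Delta_T>0$, $\delta_T>0$, a pilot length $n\ge 1$, a pre-beamforming SNR $\gamma>0$ and a constant receive gain $G_R>0$. For an initial angular error $\epsilon\in[-B_T,B_T]$, let $Q^+$ and $Q^-$ be independent non-central chi-square random variables with $2$ degrees of freedom and non-centrality parameters $\eta^{\pm}=2n\gamma G_R\, G_T(\epsilon\pm\Delta_T)$, let $\Gamma=2n\gamma G_R\,G_T(\epsilon)$, let $h=\delta_T\,(Q^+-Q^-)/\Gamma$, and let $\tilde h=\min(|h|,B_T)\cdot z(h)$, where $z(\cdot)\in\{-1,1\}$ is the sign function. For $a\ge 0$ define the events $\mathcal A_\epsilon=\{|\epsilon+\tilde h|>B_T\}$ and $\mathcal B_\epsilon(a)=\{|\epsilon+\tilde h|+a>B_T\}$, and define $$J_a=\sup_{\epsilon\in[-B_T,B_T]}\Big[\Pr(\mathcal A_\epsilon)+\Pr\big(\mathcal B_\epsilon(a)\cap\overline{\mathcal A_\epsilon}\big)\Big],$$ where $\overline{\mathcal A_\epsilon}$ is the complement of $\mathcal A_\epsilon$. Then $J_a$ is monotonically increasing (non-decreasing) in $a$ on $[0,B_T)$, i.e., $J_a\le J_{a'}$ whenever $0\le a\le a'<B_T$.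
   Context: This is the "fixed single-path model" of analog beam tracking at a base station with a uniform linear array of $N_T$ isotropic antennas with spacing $d$ and carrier wavelength $\lambda$. Angles are expressed in the sine domain. The beamforming gain at angular offset $\epsilon$ is $G_T(\epsilon)=\big|\frac{1}{\sqrt{N_T}}\sum_{k=0}^{N_T-1}e^{j2\pi\frac{d}{\lambda}k\epsilon}\big|^2$, so $G_T(0)=N_T$; $B_T=1/N_T$ is half the beam width. In the tracking algorithm, two measurements $Q^{\pm}$ are taken with sampling beams perturbed by $\pm\Delta_T$ from the current data beam, whose error relative to the path direction is $\epsilon$; the beam is corrected by $\tilde h$ (so the post-correction error is $\epsilon+\tilde h$), and $a$ is an upper bound on the magnitude of the path-angle change between two consecutive corrections. $J_a$ is the resulting upper bound on the probability of losing track (error leaving $[-B_T,B_T]$) between two corrections. *)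

theory Defs
  imports "HOL-Probability.Probability"
begin

text \<open>Beamforming gain of an N_T-element ULA; dl stands for d/lambda.\<close>
definition G_T :: "nat \<Rightarrow> real \<Rightarrow> real \<Rightarrow> real" where
  "G_T NT dl e = (cmod ((1 / sqrt (real NT)) *
      (\<Sum>k<NT. cis (2 * pi * dl * real k * e)))) ^ 2"

text \<open>Non-central chi-square law with 2 degrees of freedom and non-centrality lam:
  law of (X + sqrt lam)^2 + Y^2 with X, Y independent standard normal.\<close>
definition ncchi2 :: "real \<Rightarrow> real measure" where
  "ncchi2 lam = distr (density lborel std_normal_density \<Otimes>\<^sub>M density lborel std_normal_density)
      borel (\<lambda>(x, y). (x + sqrt lam)^2 + y^2)"

definition h_tilde :: "nat \<Rightarrow> real \<Rightarrow> nat \<Rightarrow> real \<Rightarrow> real \<Rightarrow> real \<Rightarrow> real \<Rightarrow> real \<Rightarrow> real \<Rightarrow> real" where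
  "h_tilde NT dl n gamma GR deltaT e qp qm =
     (let Gam = 2 * real n * gamma * GR * G_T NT dl e;
          h = deltaT * (qp - qm) / Gam
      in min \<bar>h\<bar> (1 / real NT) * sgn h)"

text \<open>Pr(A_e) + Pr(B_e(a) \<inter> complement A_e), with (Q+,Q-) independent, i.e. joint law is
  the product of the marginal laws.\<close>
definition loss_prob ::
  "nat \<Rightarrow> real \<Rightarrow> nat \<Rightarrow> real \<Rightarrow> real \<Rightarrow> real \<Rightarrow> real \<Rightarrow> real \<Rightarrow> real \<Rightarrow> real" where
  "loss_prob NT dl n gamma GR DeltaT deltaT a e =
     (let BT = 1 / real NT;
          M = ncchi2 (2 * real n * gamma * GR * G_T NT dl (e + DeltaT))
              \<Otimes>\<^sub>M ncchi2 (2 * real n * gamma * GR * G_T NT dl (e - DeltaT));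
          ht = (\<lambda>(qp, qm). h_tilde NT dl n gamma GR deltaT e qp qm);
          A = {q \<in> space M. \<bar>e + ht q\<bar> > BT};
          B = {q \<in> space M. \<bar>e + ht q\<bar> + a > BT}
      in measure M A + measure M (B \<inter> (space M - A)))"

definition J :: "nat \<Rightarrow> real \<Rightarrow> nat \<Rightarrow> real \<Rightarrow> real \<Rightarrow> real \<Rightarrow> real \<Rightarrow> real \<Rightarrow> real" where
  "J NT dl n gamma GR DeltaT deltaT a =
     (SUP e \<in> {-(1 / real NT) .. 1 / real NT}. loss_prob NT dl n gamma GR DeltaT deltaT a e)"

end

theory Submission
  imports Defs
begin

text \<open>Since \<open>B \<inter> (space M - A) = B - A\<close>, the bracket in the definition of \<open>J a\<close> is
  \<open>Pr(A \<union> B) = Pr(\<bar>e + h_tilde\<bar> + max a 0 > 1 / N\<^sub>T)\<close>, which grows with \<open>a\<close> for every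
  fixed angular error \<open>e\<close>; taking suprema preserves the inequality.\<close>

lemma prob_space_ncchi2: "prob_space (ncchi2 lam)"
proof -
  have "prob_space (density lborel std_normal_density \<Otimes>\<^sub>M density lborel std_normal_density)"
    by (intro prob_space_pair prob_space_normal_density) simp_all
  then show ?thesis unfolding ncchi2_def
    by (rule prob_space.prob_space_distr) measurable
qed

lemma space_ncchi2 [simp]: "space (ncchi2 lam) = UNIV"
  by (simp add: ncchi2_def)

lemma sets_ncchi2 [simp]: "sets (ncchi2 lam) = sets borel"
  by (simp add: ncchi2_def)

lemma h_tilde_measurable:
  "(\<lambda>(qp, qm). h_tilde NT dl n gamma GR deltaT e qp qm) \<in> borel_measurable (ncchi2 l1 \<Otimes>\<^sub>M ncchi2 l2)"
proof -
  have "sets (ncchi2 l1 \<Otimes>\<^sub>M ncchi2 l2) = sets (borel \<Otimes>\<^sub>M (borel :: real measure))"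
    by (intro sets_pair_measure_cong) simp_all
  moreover have "(\<lambda>(qp, qm). h_tilde NT dl n gamma GR deltaT e qp qm) \<in> borel_measurable (borel \<Otimes>\<^sub>M borel)"
    unfolding h_tilde_def Let_def by measurable
  ultimately show ?thesis
    using measurable_cong_sets by blast
qed

lemma h_tilde_superlevel_in_sets:
  "{(qp, qm). c < \<bar>e + h_tilde NT dl n gamma GR deltaT e qp qm\<bar> + b} \<in> sets (ncchi2 l1 \<Otimes>\<^sub>M ncchi2 l2)"
proof -
  let ?ht = "\<lambda>(qp, qm). h_tilde NT dl n gamma GR deltaT e qp qm"
  have "?ht \<in> borel_measurable (ncchi2 l1 \<Otimes>\<^sub>M ncchi2 l2)"
    by (rule h_tilde_measurable)
  then have "{q \<in> space (ncchi2 l1 \<Otimes>\<^sub>M ncchi2 l2). c < \<bar>e + ?ht q\<bar> + b} \<in> sets (ncchi2 l1 \<Otimes>\<^sub>M ncchi2 l2)"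
    by measurable
  then show ?thesis
    by (simp add: space_pair_measure case_prod_unfold)
qed

lemma loss_prob_eq_measure:
  "loss_prob NT dl n gamma GR DeltaT deltaT a e =
     measure (ncchi2 (2 * real n * gamma * GR * G_T NT dl (e + DeltaT))
                \<Otimes>\<^sub>M ncchi2 (2 * real n * gamma * GR * G_T NT dl (e - DeltaT)))
       {(qp, qm). 1 / real NT < \<bar>e + h_tilde NT dl n gamma GR deltaT e qp qm\<bar> + max a 0}"
proof -
  define M where "M = ncchi2 (2 * real n * gamma * GR * G_T NT dl (e + DeltaT))
                        \<Otimes>\<^sub>M ncchi2 (2 * real n * gamma * GR * G_T NT dl (e - DeltaT))"
  define ht where "ht = (\<lambda>(qp, qm). h_tilde NT dl n gamma GR deltaT e qp qm)"
  define A where "A = {q \<in> space M. \<bar>e + ht q\<bar> > 1 / real NT}"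
  define B where "B = {q \<in> space M. \<bar>e + ht q\<bar> + a > 1 / real NT}"
  interpret prob_space M
    unfolding M_def by (intro prob_space_pair prob_space_ncchi2)
  have "ht \<in> borel_measurable M"
    unfolding M_def ht_def by (rule h_tilde_measurable)
  then have sets: "A \<in> sets M" "B \<in> sets M"
    unfolding A_def B_def by measurable
  have "loss_prob NT dl n gamma GR DeltaT deltaT a e = measure M A + measure M (B \<inter> (space M - A))"
    unfolding loss_prob_def Let_def M_def ht_def A_def B_def ..
  also have "B \<inter> (space M - A) = B - A"
    unfolding B_def by blast
  also have "measure M A + measure M (B - A) = measure M (A \<union> B)"
    using finite_measure_Union' sets by simp
  also have "A \<union> B = {(qp, qm). 1 / real NT < \<bar>e + h_tilde NT dl n gamma GR deltaT e qp qm\<bar> + max a 0}"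
    unfolding A_def B_def ht_def M_def by (auto simp: space_pair_measure max_def)
  finally show ?thesis
    unfolding M_def .
qed

lemma loss_prob_mono:
  assumes "a \<le> a'"
  shows "loss_prob NT dl n gamma GR DeltaT deltaT a e \<le> loss_prob NT dl n gamma GR DeltaT deltaT a' e"
proof -
  interpret prob_space "ncchi2 (2 * real n * gamma * GR * G_T NT dl (e + DeltaT))
                          \<Otimes>\<^sub>M ncchi2 (2 * real n * gamma * GR * G_T NT dl (e - DeltaT))"
    by (intro prob_space_pair prob_space_ncchi2)
  have "{(qp, qm). 1 / real NT < \<bar>e + h_tilde NT dl n gamma GR deltaT e qp qm\<bar> + max a 0}
      \<subseteq> {(qp, qm). 1 / real NT < \<bar>e + h_tilde NT dl n gamma GR deltaT e qp qm\<bar> + max a' 0}"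
    using assms by auto
  then show ?thesis
    unfolding loss_prob_eq_measure by (rule finite_measure_mono) (rule h_tilde_superlevel_in_sets)
qed

lemma loss_prob_le_1: "loss_prob NT dl n gamma GR DeltaT deltaT a e \<le> 1"
proof -
  interpret prob_space "ncchi2 (2 * real n * gamma * GR * G_T NT dl (e + DeltaT))
                          \<Otimes>\<^sub>M ncchi2 (2 * real n * gamma * GR * G_T NT dl (e - DeltaT))"
    by (intro prob_space_pair prob_space_ncchi2)
  show ?thesis
    unfolding loss_prob_eq_measure by (rule prob_le_1)
qed

theorem lemma1:
  fixes NT n :: nat and d lam gamma GR DeltaT deltaT a a' :: real
  assumes "NT \<ge> 1" and "d > 0" and "lam > 0"
    and "DeltaT > 0" and "deltaT > 0" and "n \<ge> 1" and "gamma > 0" and "GR > 0"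
    and "0 \<le> a" and "a \<le> a'" and "a' < 1 / real NT"
  shows "J NT (d / lam) n gamma GR DeltaT deltaT a \<le> J NT (d / lam) n gamma GR DeltaT deltaT a'"
  unfolding J_def
proof (rule cSUP_mono)
  show "{- (1 / real NT)..1 / real NT} \<noteq> {}"
    by simp
  show "bdd_above ((loss_prob NT (d / lam) n gamma GR DeltaT deltaT a') ` {- (1 / real NT)..1 / real NT})"
    using loss_prob_le_1 by (intro bdd_aboveI2) blast
  show "\<exists>e'\<in>{- (1 / real NT)..1 / real NT}.
      loss_prob NT (d / lam) n gamma GR DeltaT deltaT a e \<le> loss_prob NT (d / lam) n gamma GR DeltaT deltaT a' e'"
    if "e \<in> {- (1 / real NT)..1 / real NT}" for e
    using that loss_prob_mono[OF \<open>a \<le> a'\<close>] by blast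
qed

end
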